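(* Let $\mathcal B=(\mathcal B_1,\dots,\mathcal B_B)$ be a partition of $\{1,\dots,N\}$ with weights $\omega=(\omega_1,\dots,\omega_B)$, $\omega_b\ge1$. Let $1\le p\le q\le2$ and suppose $A\in\mathbb R^{m\times N}$ satisfies the $\ell^q_\omega$-BRNSP of order $s\ge\|\omega\|_\infty^2$ with constants $0<\rho<1$ and $\tau>0$. Then for all $x,z\in\mathbb R^N$, $$\|z-x\|_{2,p}^{(\omega)}\le\frac{C_\rho}{s^{1-1/p}}\Big(\|z\|_{2,1}^{(\omega)}-\|x\|_{2,1}^{(\omega)}+2\sigma_s(x)_{2,1}^{(\omega)}\Big)+\frac{D_{\rho,\tau}}{s^{1/q-1/p}}\|A(z-x)\|_2,$$ with $C_\rho=\frac{(1+\rho)^2}{1-\rho}$ and $D_{\rho,\tau}=\frac{3+\rho}{1-\rho}\tau$.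
   Context: Block structure: $\mathcal B=(\mathcal B_1,\dots,\mathcal B_B)$ partition of $\{1,\dots,N\}$; $x[b]=x[\mathcal B_b]$; for $S\subseteq\{1,\dots,B\}$, $x[S]$ equals $x$ on blocks in $S$ and $0$ elsewhere, $S^c$ its complement in $\{1,\dots,B\}$. Weights $\omega_b\ge1$, $\|\omega\|_\infty=\max_b\omega_b$, $\omega(S)=\sum_{b\in S}\omega_b^2$. $\|x\|_{2,p}^{(\omega)}=\big(\sum_b\omega_b^{2-p}\|x[b]\|_2^p\big)^{1/p}$. $\|x\|_0^{(\omega)}=\omega(\{b:x[b]\ne0\})$. $\sigma_s(x)_{2,p}^{(\omega)}=\inf\{\|x-z\|_{2,p}^{(\omega)}:\|z\|_0^{(\omega)}\le s\}$. Definition ($\ell^p_\omega$-BRNSP): $A\in\mathbb R^{m\times N}$ satisfies the weighted block $\ell^p$ robust null space property of order $s\ge\|\omega\|_\infty$ with constants $\rho\in(0,1)$, $\tau>0$ if $\|x[S]\|_{2,p}^{(\omega)}\le\frac{\rho}{s^{1-1/p}}\|x[S^c]\|_{2,1}^{(\omega)}+\tau\|Ax\|_2$ for all $x\in\mathbb R^N$ and all $S\subseteq\{1,\dots,B\}$ with $\omega(S)\le s$. *)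

theory Defs
  imports "HOL-Analysis.Analysis"
begin

(* Indices of R^N are 0..<N, blocks are indexed 0..<B.
   Vectors are functions nat => real; only the coordinates in {0..<N} matter.
   Matrices A in R^{m x N} are functions nat => nat => real (rows i<m, columns j<N). *)

definition is_block_partition :: "nat \<Rightarrow> nat \<Rightarrow> (nat \<Rightarrow> nat set) \<Rightarrow> bool" where
  "is_block_partition N B blk \<longleftrightarrow>
     (\<forall>b<B. blk b \<noteq> {}) \<and>
     (\<forall>b<B. \<forall>b'<B. b \<noteq> b' \<longrightarrow> blk b \<inter> blk b' = {}) \<and>
     (\<Union>b\<in>{0..<B}. blk b) = {0..<N}"

definition block_norm :: "(nat \<Rightarrow> nat set) \<Rightarrow> (nat \<Rightarrow> real) \<Rightarrow> nat \<Rightarrow> real" where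
  "block_norm blk x b = sqrt (\<Sum>i\<in>blk b. (x i)\<^sup>2)"

definition wnorm :: "nat \<Rightarrow> (nat \<Rightarrow> nat set) \<Rightarrow> (nat \<Rightarrow> real) \<Rightarrow> real \<Rightarrow> (nat \<Rightarrow> real) \<Rightarrow> real" where
  "wnorm B blk w p x = (\<Sum>b<B. w b powr (2 - p) * block_norm blk x b powr p) powr (1 / p)"

definition wsize :: "(nat \<Rightarrow> real) \<Rightarrow> nat set \<Rightarrow> real" where
  "wsize w S = (\<Sum>b\<in>S. (w b)\<^sup>2)"

definition winf :: "nat \<Rightarrow> (nat \<Rightarrow> real) \<Rightarrow> real" where
  "winf B w = Max (insert 0 (w ` {0..<B}))"

definition wnorm0 :: "nat \<Rightarrow> (nat \<Rightarrow> nat set) \<Rightarrow> (nat \<Rightarrow> real) \<Rightarrow> (nat \<Rightarrow> real) \<Rightarrow> real" where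
  "wnorm0 B blk w x = wsize w {b\<in>{0..<B}. \<exists>i\<in>blk b. x i \<noteq> 0}"

definition restr :: "(nat \<Rightarrow> nat set) \<Rightarrow> nat set \<Rightarrow> (nat \<Rightarrow> real) \<Rightarrow> nat \<Rightarrow> real" where
  "restr blk S x = (\<lambda>i. if i \<in> (\<Union>b\<in>S. blk b) then x i else 0)"

definition best_s_term_error ::
  "nat \<Rightarrow> (nat \<Rightarrow> nat set) \<Rightarrow> (nat \<Rightarrow> real) \<Rightarrow> real \<Rightarrow> real \<Rightarrow> (nat \<Rightarrow> real) \<Rightarrow> real" where
  "best_s_term_error B blk w p s x =
     Inf {wnorm B blk w p (x - z) | z. wnorm0 B blk w z \<le> s}"

definition mat_apply :: "nat \<Rightarrow> (nat \<Rightarrow> nat \<Rightarrow> real) \<Rightarrow> (nat \<Rightarrow> real) \<Rightarrow> nat \<Rightarrow> real" where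
  "mat_apply N A x = (\<lambda>i. \<Sum>j<N. A i j * x j)"

definition eucl_norm :: "nat \<Rightarrow> (nat \<Rightarrow> real) \<Rightarrow> real" where
  "eucl_norm m y = sqrt (\<Sum>i<m. (y i)\<^sup>2)"

definition wBRNSP ::
  "nat \<Rightarrow> nat \<Rightarrow> nat \<Rightarrow> (nat \<Rightarrow> nat set) \<Rightarrow> (nat \<Rightarrow> real) \<Rightarrow> (nat \<Rightarrow> nat \<Rightarrow> real)
   \<Rightarrow> real \<Rightarrow> real \<Rightarrow> real \<Rightarrow> real \<Rightarrow> bool" where
  "wBRNSP m N B blk w A p s \<rho> \<tau> \<longleftrightarrow>
     s \<ge> winf B w \<and> 0 < \<rho> \<and> \<rho> < 1 \<and> 0 < \<tau> \<and>
     (\<forall>x S. S \<subseteq> {0..<B} \<and> wsize w S \<le> s \<longrightarrow>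
        wnorm B blk w p (restr blk S x)
          \<le> \<rho> / s powr (1 - 1 / p) * wnorm B blk w 1 (restr blk ({0..<B} - S) x)
             + \<tau> * eucl_norm m (mat_apply N A x))"

end

theory Submission
  imports Defs
begin

text \<open>Write v = z - x. Hoelder's inequality with the weights w_b^2 shows that the l^q-property
  implies the l^p-property for every p <= q, with tau replaced by tau s^(1/p - 1/q). For p = 1,
  the cone argument on the block support of an s-sparse z' bounds ||v||_{2,1} in terms of
  ||z||_{2,1} - ||x||_{2,1} + 2 ||x - z'||_{2,1} and ||Av||_2. For general p, split v into the
  blocks with ||v[b]||_2 > w_b ||v||_{2,1} / s, which have weighted size at most s and are
  controlled by the l^p-property, and the remaining blocks, whose contribution a weighted Stechkin
  estimate bounds by s^(1/p - 1) ||v||_{2,1}. Taking the infimum over z' gives sigma_s(x).\<close>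

lemma powr_add_le_add_powr:
  fixes x y r :: real
  assumes "0 \<le> x" "0 \<le> y" "0 < r" "r \<le> 1"
  shows "(x + y) powr r \<le> x powr r + y powr r"
proof (cases "x + y = 0")
  case True
  then show ?thesis using assms by simp
next
  case False
  with assms have pos: "0 < x + y" by simp
  have le_powr: "u \<le> u powr r" if "0 \<le> u" "u \<le> 1" for u :: real
    using that assms powr_mono'[of r 1 u] by (cases "u = 0") auto
  have "1 = x / (x + y) + y / (x + y)"
    using pos by (simp add: add_divide_distrib[symmetric])
  also have "\<dots> \<le> (x / (x + y)) powr r + (y / (x + y)) powr r"
    using assms pos by (intro add_mono le_powr) auto
  also have "\<dots> = (x powr r + y powr r) / (x + y) powr r"
    using assms pos by (simp add: powr_divide add_divide_distrib)
  finally show ?thesis using pos by (simp add: divide_le_eq)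
qed

text \<open>Jensen's inequality for \<open>t \<mapsto> t powr (q/p)\<close>, with probability weights
  \<open>w b\<^sup>2 / \<Sum>w\<^sup>2\<close>, applied to the values \<open>(a b / w b) powr p\<close>.\<close>

lemma weighted_power_mean_le_pos:
  fixes w a :: "'a \<Rightarrow> real" and p q :: real
  assumes fin: "finite S" and ne: "S \<noteq> {}"
    and w: "\<And>b. b \<in> S \<Longrightarrow> 0 < w b" and a: "\<And>b. b \<in> S \<Longrightarrow> 0 < a b"
    and p: "0 < p" and pq: "p \<le> q"
  shows "(\<Sum>b\<in>S. w b powr (2-p) * a b powr p) powr (1/p)
     \<le> (\<Sum>b\<in>S. (w b)\<^sup>2) powr (1/p - 1/q) * (\<Sum>b\<in>S. w b powr (2-q) * a b powr q) powr (1/q)"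
proof -
  define M where "M = (\<Sum>b\<in>S. (w b)\<^sup>2)"
  define P where "P r = (\<Sum>b\<in>S. w b powr (2-r) * a b powr r)" for r
  have M: "0 < M" unfolding M_def using fin ne w by (intro sum_pos) (simp_all add: power2_eq_square)
  have q: "0 < q" using p pq by linarith
  have weight: "(w b)\<^sup>2 / M * (a b / w b) powr r = w b powr (2-r) * a b powr r / M"
    if "b \<in> S" for b r
    using w[OF that] a[OF that] by (simp add: powr_divide powr_diff flip: powr_numeral)
  have sum1: "(\<Sum>b\<in>S. (w b)\<^sup>2 / M) = 1"
    using M unfolding M_def by (simp add: sum_divide_distrib[symmetric])
  have convex: "convex_on {0<..} (\<lambda>t::real. t powr (q/p))"
    using pq p by (intro powr_convex) simp
  have P: "P r / M = (\<Sum>b\<in>S. ((w b)\<^sup>2 / M) * (a b / w b) powr r)" for r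
    unfolding P_def sum_divide_distrib by (intro sum.cong refl) (metis weight)
  have "(a b / w b) powr p \<in> {0<..}" "0 \<le> (w b)\<^sup>2 / M" if "b \<in> S" for b
    using a[OF that] w[OF that] M by auto
  then have "(\<Sum>b\<in>S. ((w b)\<^sup>2 / M) *\<^sub>R (a b / w b) powr p) powr (q/p)
      \<le> (\<Sum>b\<in>S. (w b)\<^sup>2 / M * ((a b / w b) powr p) powr (q/p))"
    using convex_on_sum[OF fin ne convex sum1, of "\<lambda>b. (a b / w b) powr p"] by blast
  then have "(P p / M) powr (q/p) \<le> P q / M"
    using p by (simp add: P powr_powr)
  then have "((P p / M) powr (q/p)) powr (1/q) \<le> (P q / M) powr (1/q)"
    using M q by (intro powr_mono2) (auto simp: P_def intro!: sum_nonneg)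
  then have "P p powr (1/p) / M powr (1/p) \<le> P q powr (1/q) / M powr (1/q)"
    using M p q by (simp add: powr_powr powr_divide P_def sum_nonneg)
  then have "P p powr (1/p) \<le> M powr (1/p) / M powr (1/q) * P q powr (1/q)"
    using M by (simp add: divide_le_eq mult.commute)
  then show ?thesis unfolding P_def M_def by (simp add: powr_diff)
qed

lemma weighted_power_mean_le:
  fixes w a :: "'a \<Rightarrow> real" and p q :: real
  assumes fin: "finite S" and w: "\<And>b. b \<in> S \<Longrightarrow> 0 < w b" and a: "\<And>b. b \<in> S \<Longrightarrow> 0 \<le> a b"
    and p: "0 < p" and pq: "p \<le> q"
  shows "(\<Sum>b\<in>S. w b powr (2-p) * a b powr p) powr (1/p)
     \<le> (\<Sum>b\<in>S. (w b)\<^sup>2) powr (1/p - 1/q) * (\<Sum>b\<in>S. w b powr (2-q) * a b powr q) powr (1/q)"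
proof -
  define S' where "S' = {b\<in>S. 0 < a b}"
  have S': "S' \<subseteq> S" "finite S'" using fin unfolding S'_def by auto
  have support: "(\<Sum>b\<in>S. w b powr (2-r) * a b powr r) = (\<Sum>b\<in>S'. w b powr (2-r) * a b powr r)" for r
    using a by (intro sum.mono_neutral_right[OF fin]) (force simp: S'_def)+
  show ?thesis
  proof (cases "S' = {}")
    case True
    then show ?thesis unfolding support by simp
  next
    case False
    have "(\<Sum>b\<in>S'. w b powr (2-p) * a b powr p) powr (1/p)
        \<le> (\<Sum>b\<in>S'. (w b)\<^sup>2) powr (1/p - 1/q) * (\<Sum>b\<in>S'. w b powr (2-q) * a b powr q) powr (1/q)"
      using S' w p pq False by (intro weighted_power_mean_le_pos) (auto simp: S'_def)
    also have "(\<Sum>b\<in>S'. (w b)\<^sup>2) powr (1/p - 1/q) \<le> (\<Sum>b\<in>S. (w b)\<^sup>2) powr (1/p - 1/q)"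
      using p pq S' fin by (intro powr_mono2 sum_mono2) (auto simp: frac_le sum_nonneg)
    finally show ?thesis unfolding support by (simp add: mult_right_mono)
  qed
qed

lemma block_norm_nonneg: "0 \<le> block_norm blk x b"
  unfolding block_norm_def by (simp add: sum_nonneg)

lemma block_norm_eq_L2_set: "block_norm blk x b = L2_set x (blk b)"
  unfolding block_norm_def L2_set_def ..

lemma block_norm_diff_le: "block_norm blk (f - g) b \<le> block_norm blk f b + block_norm blk g b"
proof -
  have "block_norm blk (f - g) b = L2_set (\<lambda>i. f i + - g i) (blk b)"
    by (simp add: block_norm_eq_L2_set fun_diff_def)
  also have "\<dots> \<le> L2_set f (blk b) + L2_set (\<lambda>i. - g i) (blk b)"
    by (rule L2_set_triangle_ineq)
  finally show ?thesis by (simp add: block_norm_eq_L2_set L2_set_def)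
qed

lemma block_norm_diff_commute: "block_norm blk (f - g) b = block_norm blk (g - f) b"
  unfolding block_norm_def by (simp add: power2_commute)

lemma block_norm_le_add_diff: "block_norm blk f b \<le> block_norm blk g b + block_norm blk (f - g) b"
  using block_norm_diff_le[of blk "f - g" "- g" b]
  by (simp add: block_norm_def fun_diff_def add.commute)

lemma block_norm_restr:
  assumes part: "is_block_partition N B blk" and S: "S \<subseteq> {..<B}" and b: "b < B"
  shows "block_norm blk (restr blk S x) b = (if b \<in> S then block_norm blk x b else 0)"
proof -
  have "restr blk S x i = (if b \<in> S then x i else 0)" if i: "i \<in> blk b" for i
  proof -
    have "b' = b" if "b' \<in> S" "i \<in> blk b'" for b'
      using part that i S b unfolding is_block_partition_def by blast
    then show ?thesis using i unfolding restr_def by auto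
  qed
  then show ?thesis unfolding block_norm_def by (auto cong: sum.cong)
qed

lemma wnorm_restr:
  assumes part: "is_block_partition N B blk" and S: "S \<subseteq> {..<B}"
  shows "wnorm B blk w p (restr blk S x)
    = (\<Sum>b\<in>S. w b powr (2-p) * block_norm blk x b powr p) powr (1/p)"
proof -
  have "(\<Sum>b<B. w b powr (2-p) * block_norm blk (restr blk S x) b powr p)
      = (\<Sum>b<B. if b \<in> S then w b powr (2-p) * block_norm blk x b powr p else 0)"
    using block_norm_restr[OF part S] by (intro sum.cong) auto
  also have "\<dots> = (\<Sum>b\<in>S. w b powr (2-p) * block_norm blk x b powr p)"
    using S by (simp add: sum.If_cases Int_absorb1)
  finally show ?thesis unfolding wnorm_def by simp
qed

lemma weighted_sum_powr_one:
  fixes w c :: "'a \<Rightarrow> real"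
  assumes "\<And>b. b \<in> S \<Longrightarrow> 0 \<le> w b" "\<And>b. b \<in> S \<Longrightarrow> 0 \<le> c b"
  shows "(\<Sum>b\<in>S. w b powr (2-1) * c b powr 1) powr (1/1) = (\<Sum>b\<in>S. w b * c b)"
proof -
  have "(\<Sum>b\<in>S. w b powr (2-1) * c b powr 1) = (\<Sum>b\<in>S. w b * c b)"
    using assms by (intro sum.cong) auto
  moreover have "0 \<le> (\<Sum>b\<in>S. w b * c b)"
    using assms by (intro sum_nonneg) auto
  ultimately show ?thesis by simp
qed

lemma wnorm_one:
  assumes "\<And>b. b < B \<Longrightarrow> 0 \<le> w b"
  shows "wnorm B blk w 1 x = (\<Sum>b<B. w b * block_norm blk x b)"
  unfolding wnorm_def using assms by (intro weighted_sum_powr_one) (auto simp: block_norm_nonneg)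

lemma wnorm_one_restr:
  assumes "is_block_partition N B blk" "S \<subseteq> {..<B}" "\<And>b. b < B \<Longrightarrow> 0 \<le> w b"
  shows "wnorm B blk w 1 (restr blk S x) = (\<Sum>b\<in>S. w b * block_norm blk x b)"
  unfolding wnorm_restr[OF assms(1,2)] using assms(2,3)
  by (intro weighted_sum_powr_one) (auto simp: block_norm_nonneg)

lemma wBRNSP_exponent_mono:
  assumes part: "is_block_partition N B blk" and weights: "\<And>b. b < B \<Longrightarrow> 1 \<le> w b"
    and nsp: "wBRNSP m N B blk w A q s \<rho> \<tau>" and p: "0 < p" "p \<le> q" and s: "0 < s"
  shows "wBRNSP m N B blk w A p s \<rho> (\<tau> * s powr (1/p - 1/q))"
proof -
  have exps: "s powr (1/p - 1/q) = s powr (1 - 1/q) / s powr (1 - 1/p)"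
    using powr_diff[of s "1 - 1/q" "1 - 1/p"] by simp
  have "wnorm B blk w p (restr blk S x)
      \<le> \<rho> / s powr (1 - 1/p) * wnorm B blk w 1 (restr blk ({..<B} - S) x)
        + \<tau> * s powr (1/p - 1/q) * eucl_norm m (mat_apply N A x)"
    if S: "S \<subseteq> {..<B}" "wsize w S \<le> s" for x S
  proof -
    have "wnorm B blk w p (restr blk S x) \<le> wsize w S powr (1/p - 1/q) * wnorm B blk w q (restr blk S x)"
      unfolding wnorm_restr[OF part S(1)] wsize_def using S(1) weights p
      by (intro weighted_power_mean_le)
        (auto simp: block_norm_nonneg less_le_trans[OF zero_less_one] finite_subset)
    also have "\<dots> \<le> s powr (1/p - 1/q) * (\<rho> / s powr (1 - 1/q) * wnorm B blk w 1 (restr blk ({..<B} - S) x)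
        + \<tau> * eucl_norm m (mat_apply N A x))"
      using nsp S p unfolding wBRNSP_def atLeast0LessThan
      by (intro mult_mono powr_mono2) (auto simp: wsize_def sum_nonneg frac_le wnorm_def)
    also have "\<dots> = \<rho> * (s powr (1/p - 1/q) / s powr (1 - 1/q)) * wnorm B blk w 1 (restr blk ({..<B} - S) x)
        + \<tau> * s powr (1/p - 1/q) * eucl_norm m (mat_apply N A x)"
      by (simp add: algebra_simps)
    also have "s powr (1/p - 1/q) / s powr (1 - 1/q) = 1 / s powr (1 - 1/p)"
      using s by (simp add: exps)
    finally show ?thesis by simp
  qed
  then show ?thesis
    using nsp s unfolding wBRNSP_def atLeast0LessThan by auto
qed

lemma robust_null_space_sum_le:
  fixes u v E c \<rho> :: real
  assumes u: "u \<le> \<rho> * v + c" and v: "v \<le> E + u" and \<rho>: "0 \<le> \<rho>" "\<rho> < 1"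
  shows "u + v \<le> (1 + \<rho>) / (1 - \<rho>) * E + 2 / (1 - \<rho>) * c"
proof -
  have "(1 - \<rho>) * v \<le> E + c"
    using u v by (simp add: algebra_simps)
  then have "(1 + \<rho>) * ((1 - \<rho>) * v) \<le> (1 + \<rho>) * (E + c)"
    using \<rho> by (intro mult_left_mono) auto
  then have "(1 - \<rho>) * (u + v) \<le> (1 + \<rho>) * E + 2 * c"
    using mult_left_mono[OF u, of "1 - \<rho>"] \<rho> by (simp add: algebra_simps)
  then have "u + v \<le> ((1 + \<rho>) * E + 2 * c) / (1 - \<rho>)"
    using \<rho> by (simp add: pos_le_divide_eq mult.commute)
  also have "\<dots> = (1 + \<rho>) / (1 - \<rho>) * E + 2 / (1 - \<rho>) * c"
    using \<rho> by (simp add: divide_simps)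
  finally show ?thesis .
qed

definition block_support :: "nat \<Rightarrow> (nat \<Rightarrow> nat set) \<Rightarrow> (nat \<Rightarrow> real) \<Rightarrow> nat set" where
  "block_support B blk z = {b\<in>{0..<B}. \<exists>i\<in>blk b. z i \<noteq> 0}"

lemma block_support_subset: "block_support B blk z \<subseteq> {..<B}"
  unfolding block_support_def by auto

lemma wnorm0_eq_wsize_block_support: "wnorm0 B blk w z = wsize w (block_support B blk z)"
  unfolding wnorm0_def block_support_def ..

lemma sum_off_block_support_le_wnorm_one:
  assumes w: "\<And>b. b < B \<Longrightarrow> 0 \<le> w b"
  shows "(\<Sum>b\<in>{..<B} - block_support B blk z. w b * block_norm blk x b) \<le> wnorm B blk w 1 (x - z)"
proof -
  have "block_norm blk (x - z) b = block_norm blk x b" if "b \<in> {..<B} - block_support B blk z" for b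
    using that unfolding block_support_def block_norm_def by (auto intro!: sum.cong)
  then have "(\<Sum>b\<in>{..<B} - block_support B blk z. w b * block_norm blk x b)
      = (\<Sum>b\<in>{..<B} - block_support B blk z. w b * block_norm blk (x - z) b)"
    by simp
  also have "\<dots> \<le> (\<Sum>b<B. w b * block_norm blk (x - z) b)"
    using w by (intro sum_mono2) (auto simp: block_norm_nonneg)
  finally show ?thesis
    using w by (simp add: wnorm_one)
qed

lemma wnorm_one_diff_tail_le:
  assumes w: "\<And>b. b < B \<Longrightarrow> 0 \<le> w b" and T: "T \<subseteq> {..<B}"
  shows "(\<Sum>b\<in>{..<B}-T. w b * block_norm blk (z - x) b)
    \<le> wnorm B blk w 1 z - wnorm B blk w 1 x + 2 * (\<Sum>b\<in>{..<B}-T. w b * block_norm blk x b)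
      + (\<Sum>b\<in>T. w b * block_norm blk (z - x) b)"
proof -
  have split: "sum f {..<B} = sum f T + sum f ({..<B} - T)" for f :: "nat \<Rightarrow> real"
    using T by (simp add: sum.subset_diff add.commute)
  have on_T: "(\<Sum>b\<in>T. w b * block_norm blk x b)
      \<le> (\<Sum>b\<in>T. w b * block_norm blk z b) + (\<Sum>b\<in>T. w b * block_norm blk (z - x) b)"
  proof -
    have "w b * block_norm blk x b \<le> w b * block_norm blk z b + w b * block_norm blk (z - x) b"
      if "b \<in> T" for b
      using mult_left_mono[OF block_norm_le_add_diff[of blk x b z]] w[of b] that T
      by (auto simp: block_norm_diff_commute[of blk x z] distrib_left)
    then show ?thesis unfolding sum.distrib[symmetric] by (rule sum_mono)
  qed
  have off_T: "(\<Sum>b\<in>{..<B}-T. w b * block_norm blk (z - x) b)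
      \<le> (\<Sum>b\<in>{..<B}-T. w b * block_norm blk z b) + (\<Sum>b\<in>{..<B}-T. w b * block_norm blk x b)"
  proof -
    have "w b * block_norm blk (z - x) b \<le> w b * block_norm blk z b + w b * block_norm blk x b"
      if "b \<in> {..<B}-T" for b
      using mult_left_mono[OF block_norm_diff_le[of blk z x b]] w[of b] that
      by (auto simp: distrib_left)
    then show ?thesis unfolding sum.distrib[symmetric] by (rule sum_mono)
  qed
  show ?thesis
    using on_T off_T split[of "\<lambda>b. w b * block_norm blk z b"] split[of "\<lambda>b. w b * block_norm blk x b"]
    by (simp add: wnorm_one[where w = w, OF w])
qed

lemma wBRNSP_one_error_bound:
  assumes part: "is_block_partition N B blk" and w: "\<And>b. b < B \<Longrightarrow> 0 \<le> w b"
    and nsp: "wBRNSP m N B blk w A 1 s \<rho> \<tau>" and s: "0 < s" and z': "wnorm0 B blk w z' \<le> s"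
  shows "wnorm B blk w 1 (z - x)
    \<le> (1 + \<rho>) / (1 - \<rho>) * (wnorm B blk w 1 z - wnorm B blk w 1 x + 2 * wnorm B blk w 1 (x - z'))
      + 2 / (1 - \<rho>) * (\<tau> * eucl_norm m (mat_apply N A (z - x)))"
proof -
  define T where "T = block_support B blk z'"
  define L where "L S = (\<Sum>b\<in>S. w b * block_norm blk (z - x) b)" for S
  have T: "T \<subseteq> {..<B}" "wsize w T \<le> s"
    using z' block_support_subset unfolding T_def wnorm0_eq_wsize_block_support by auto
  have \<rho>: "0 < \<rho>" "\<rho> < 1" using nsp unfolding wBRNSP_def by auto
  have "L T \<le> \<rho> * L ({..<B} - T) + \<tau> * eucl_norm m (mat_apply N A (z - x))"
    using nsp T s unfolding wBRNSP_def atLeast0LessThan L_def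
    by (auto simp: wnorm_one_restr[OF part _ w])
  moreover have "L ({..<B} - T) \<le> wnorm B blk w 1 z - wnorm B blk w 1 x + 2 * wnorm B blk w 1 (x - z') + L T"
    using wnorm_one_diff_tail_le[where w = w and B = B and blk = blk and z = z and x = x, OF w T(1)]
      sum_off_block_support_le_wnorm_one[where w = w and B = B and blk = blk and z = z' and x = x, OF w]
    unfolding L_def T_def by linarith
  moreover have "L T + L ({..<B} - T) = wnorm B blk w 1 (z - x)"
    using T(1) unfolding L_def by (simp add: wnorm_one[where w = w, OF w] sum.subset_diff)
  ultimately show ?thesis
    using robust_null_space_sum_le \<rho> by (metis less_imp_le)
qed

lemma weighted_powr_le_of_le:
  fixes w a t p :: real
  assumes w: "1 \<le> w" and a: "0 \<le> a" "a \<le> t * w" and p: "1 \<le> p"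
  shows "w powr (2-p) * a powr p \<le> t powr (p-1) * (w * a)"
proof (cases "a = 0")
  case True
  then show ?thesis using p by simp
next
  case False
  with a have a_pos: "0 < a" by simp
  have "a powr p = a powr (p-1) * a"
    using a_pos powr_add[of a "p-1" 1] by simp
  moreover have "a powr (p-1) \<le> t powr (p-1) * w powr (p-1)"
    using a a_pos w p powr_mult[of t w "p-1"] zero_le_mult_iff[of t w]
    by (intro order_trans[OF powr_mono2[of "p-1" a "t * w"]]) auto
  moreover have "w powr (2-p) * w powr (p-1) = w"
    using w powr_add[of w "2-p" "p-1"] by simp
  ultimately have "w powr (2-p) * a powr p \<le> w powr (2-p) * (t powr (p-1) * w powr (p-1)) * a"
    using a_pos by (simp add: mult_left_mono mult_right_mono mult.assoc)
  also have "\<dots> = t powr (p-1) * (w * a)"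
    using \<open>w powr (2-p) * w powr (p-1) = w\<close> by (simp add: algebra_simps)
  finally show ?thesis .
qed

text \<open>The witness is \<open>S = {b \<in> V. t * w b < a b}\<close> with \<open>t = (\<Sum>b\<in>V. w b * a b) / s\<close>.\<close>

lemma weighted_tail_bound:
  fixes w a :: "'a \<Rightarrow> real"
  assumes fin: "finite V" and w: "\<And>b. b \<in> V \<Longrightarrow> 1 \<le> w b" and a: "\<And>b. b \<in> V \<Longrightarrow> 0 \<le> a b"
    and s: "0 < s" and p: "1 \<le> p"
  obtains S where "S \<subseteq> V" "(\<Sum>b\<in>S. (w b)\<^sup>2) \<le> s"
    "(\<Sum>b\<in>V-S. w b powr (2-p) * a b powr p) powr (1/p) \<le> (\<Sum>b\<in>V. w b * a b) / s powr (1 - 1/p)"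
proof
  define L where "L = (\<Sum>b\<in>V. w b * a b)"
  define t where "t = L / s"
  define S where "S = {b\<in>V. t * w b < a b}"
  have w0: "0 \<le> w b" and wa: "0 \<le> w b * a b" if "b \<in> V" for b
    using w[OF that] a[OF that] by simp_all
  have L_mono: "(\<Sum>b\<in>S'. w b * a b) \<le> L" if "S' \<subseteq> V" for S'
    unfolding L_def using fin that wa by (intro sum_mono2) auto
  have t: "0 \<le> t"
    unfolding t_def using L_mono[of "{}"] s by simp
  show "S \<subseteq> V" unfolding S_def by auto
  show "(\<Sum>b\<in>S. (w b)\<^sup>2) \<le> s"
  proof (cases "t = 0")
    case True
    have "w b * a b \<le> 0" if "b \<in> V" for b
      using L_mono[of "{b}"] that s True unfolding t_def by simp
    then have "S = {}"
      using w True unfolding S_def by (fastforce simp: mult_le_0_iff)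
    then show ?thesis using s by simp
  next
    case False
    have "(\<Sum>b\<in>S. (w b)\<^sup>2) * t = (\<Sum>b\<in>S. w b * (t * w b))"
      unfolding sum_distrib_right by (simp add: power2_eq_square algebra_simps)
    also have "\<dots> \<le> (\<Sum>b\<in>S. w b * a b)"
      using w0 unfolding S_def by (intro sum_mono mult_left_mono) auto
    also have "\<dots> \<le> s * t"
      using L_mono[of S] s unfolding S_def t_def by auto
    finally show ?thesis using t False by simp
  qed
  have "(\<Sum>b\<in>V-S. w b powr (2-p) * a b powr p) \<le> (\<Sum>b\<in>V-S. t powr (p-1) * (w b * a b))"
    using w a p unfolding S_def by (intro sum_mono weighted_powr_le_of_le) auto
  also have "\<dots> \<le> t powr (p-1) * L"
    using L_mono[of "V - S"] by (simp add: sum_distrib_left[symmetric] mult_left_mono)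
  finally have tail: "(\<Sum>b\<in>V-S. w b powr (2-p) * a b powr p) powr (1/p) \<le> (t powr (p-1) * L) powr (1/p)"
    using p by (intro powr_mono2) (auto intro!: sum_nonneg)
  have "(t powr (p-1) * L) powr (1/p) = L / s powr (1 - 1/p)"
  proof (cases "L = 0")
    case False
    then have L: "0 < L" using L_mono[of "{}"] by simp
    have "(t powr (p-1) * L) powr (1/p) = (L / s) powr (1 - 1/p) * L powr (1/p)"
      using t L p by (simp add: powr_mult powr_powr t_def diff_divide_distrib)
    also have "\<dots> = L powr (1 - 1/p + 1/p) / s powr (1 - 1/p)"
      using L s powr_add[of L "1 - 1/p" "1/p"] by (simp add: powr_divide)
    finally show ?thesis using L by simp
  qed simp
  with tail show "(\<Sum>b\<in>V-S. w b powr (2-p) * a b powr p) powr (1/p) \<le> L / s powr (1 - 1/p)"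
    by simp
qed

lemma wBRNSP_wnorm_le_wnorm_one:
  assumes part: "is_block_partition N B blk" and weights: "\<And>b. b < B \<Longrightarrow> 1 \<le> w b"
    and nsp: "wBRNSP m N B blk w A p s \<rho> \<tau>" and p: "1 \<le> p" and s: "0 < s"
  shows "wnorm B blk w p v
    \<le> (1 + \<rho>) / s powr (1 - 1/p) * wnorm B blk w 1 v + \<tau> * eucl_norm m (mat_apply N A v)"
proof -
  define P where "P S = (\<Sum>b\<in>S. w b powr (2-p) * block_norm blk v b powr p)" for S
  have w0: "\<And>b. b < B \<Longrightarrow> 0 \<le> w b" using weights less_le_trans[OF zero_less_one] by fastforce
  obtain S where S: "S \<subseteq> {..<B}" "wsize w S \<le> s"
    and tail: "P ({..<B} - S) powr (1/p) \<le> wnorm B blk w 1 v / s powr (1 - 1/p)"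
    using weighted_tail_bound[of "{..<B}" w "block_norm blk v" s p] weights p s
    unfolding P_def wsize_def by (auto simp: block_norm_nonneg wnorm_one[where w = w, OF w0])
  have head: "P S powr (1/p) \<le> \<rho> / s powr (1 - 1/p) * wnorm B blk w 1 v + \<tau> * eucl_norm m (mat_apply N A v)"
  proof -
    have "wnorm B blk w 1 (restr blk ({..<B} - S) v) = (\<Sum>b\<in>{..<B} - S. w b * block_norm blk v b)"
      by (rule wnorm_one_restr[OF part _ w0]) auto
    also have "\<dots> \<le> (\<Sum>b<B. w b * block_norm blk v b)"
      using w0 by (intro sum_mono2) (auto simp: block_norm_nonneg)
    also have "\<dots> = wnorm B blk w 1 v"
      by (rule wnorm_one[symmetric]) (rule w0)
    finally have "\<rho> / s powr (1 - 1/p) * wnorm B blk w 1 (restr blk ({..<B} - S) v)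
        \<le> \<rho> / s powr (1 - 1/p) * wnorm B blk w 1 v"
      using nsp unfolding wBRNSP_def by (intro mult_left_mono) auto
    moreover have "wnorm B blk w p (restr blk S v)
        \<le> \<rho> / s powr (1 - 1/p) * wnorm B blk w 1 (restr blk ({..<B} - S) v)
          + \<tau> * eucl_norm m (mat_apply N A v)"
      using nsp S unfolding wBRNSP_def atLeast0LessThan by blast
    ultimately show ?thesis
      unfolding P_def wnorm_restr[OF part S(1)] by linarith
  qed
  have "wnorm B blk w p v = (P S + P ({..<B} - S)) powr (1/p)"
    using S(1) unfolding wnorm_def P_def by (simp add: sum.subset_diff add.commute)
  also have "\<dots> \<le> P S powr (1/p) + P ({..<B} - S) powr (1/p)"
    using p unfolding P_def by (intro powr_add_le_add_powr sum_nonneg) auto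
  also have "\<dots> \<le> \<rho> / s powr (1 - 1/p) * wnorm B blk w 1 v + \<tau> * eucl_norm m (mat_apply N A v)
      + wnorm B blk w 1 v / s powr (1 - 1/p)"
    using head tail by linarith
  also have "\<dots> = (1 + \<rho>) / s powr (1 - 1/p) * wnorm B blk w 1 v + \<tau> * eucl_norm m (mat_apply N A v)"
    by (simp add: algebra_simps add_divide_distrib)
  finally show ?thesis .
qed

lemma wBRNSP_error_bound_sparse:
  assumes part: "is_block_partition N B blk" and weights: "\<And>b. b < B \<Longrightarrow> 1 \<le> w b"
    and nsp: "wBRNSP m N B blk w A q s \<rho> \<tau>" and pq: "1 \<le> p" "p \<le> q"
    and s: "0 < s" and z': "wnorm0 B blk w z' \<le> s"
  shows "wnorm B blk w p (z - x)
    \<le> ((1 + \<rho>)\<^sup>2 / (1 - \<rho>)) / s powr (1 - 1 / p)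
        * (wnorm B blk w 1 z - wnorm B blk w 1 x + 2 * wnorm B blk w 1 (x - z'))
      + ((3 + \<rho>) / (1 - \<rho>) * \<tau>) / s powr (1 / q - 1 / p)
        * eucl_norm m (mat_apply N A (z - x))"
proof -
  define E where "E = wnorm B blk w 1 z - wnorm B blk w 1 x + 2 * wnorm B blk w 1 (x - z')"
  define e where "e = eucl_norm m (mat_apply N A (z - x))"
  define \<sigma> where "\<sigma> = s powr (1 - 1/p)"
  define r where "r = s powr (1/p - 1/q)"
  have \<rho>: "0 < \<rho>" "\<rho> < 1" using nsp unfolding wBRNSP_def by auto
  have w0: "\<And>b. b < B \<Longrightarrow> 0 \<le> w b" using weights less_le_trans[OF zero_less_one] by fastforce
  have nsp1: "wBRNSP m N B blk w A 1 s \<rho> (\<tau> * s powr (1/1 - 1/q))"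
    using pq by (intro wBRNSP_exponent_mono[OF part weights nsp _ _ s]) auto
  have l1: "wnorm B blk w 1 (z - x) \<le> (1 + \<rho>) / (1 - \<rho>) * E + 2 / (1 - \<rho>) * (\<tau> * s powr (1 - 1/q) * e)"
    unfolding E_def e_def
    using wBRNSP_one_error_bound[where w = w and z = z and x = x, OF part w0 nsp1 s z'] by (simp add: mult.assoc)
  have "wBRNSP m N B blk w A p s \<rho> (\<tau> * r)"
    unfolding r_def using pq by (intro wBRNSP_exponent_mono[OF part weights nsp _ _ s]) auto
  then have lp: "wnorm B blk w p (z - x) \<le> (1 + \<rho>) / \<sigma> * wnorm B blk w 1 (z - x) + \<tau> * r * e"
    unfolding \<sigma>_def e_def using wBRNSP_wnorm_le_wnorm_one[where w = w, OF part weights _ pq(1) s] by blast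
  have \<sigma>: "0 < \<sigma>" and exps: "s powr (1 - 1/q) = \<sigma> * r" "s powr (1/q - 1/p) = 1 / r"
    unfolding \<sigma>_def r_def using s powr_add[of s "1 - 1/p" "1/p - 1/q"] powr_minus_divide[of s "1/p - 1/q"]
    by auto
  have "(1 + \<rho>) / \<sigma> * wnorm B blk w 1 (z - x)
      \<le> (1 + \<rho>) / \<sigma> * ((1 + \<rho>) / (1 - \<rho>) * E + 2 / (1 - \<rho>) * (\<tau> * (\<sigma> * r) * e))"
    using l1 \<rho> \<sigma> unfolding exps(1) by (intro mult_left_mono) auto
  with lp have "wnorm B blk w p (z - x)
      \<le> (1 + \<rho>) / \<sigma> * ((1 + \<rho>) / (1 - \<rho>) * E + 2 / (1 - \<rho>) * (\<tau> * (\<sigma> * r) * e)) + \<tau> * r * e"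
    by linarith
  also have "\<dots> = ((1 + \<rho>)\<^sup>2 / (1 - \<rho>)) / \<sigma> * E + ((3 + \<rho>) / (1 - \<rho>) * \<tau>) * r * e"
  proof -
    have "(1 + \<rho>) / \<sigma> * ((1 + \<rho>) / (1 - \<rho>) * E) = ((1 + \<rho>)\<^sup>2 / (1 - \<rho>)) / \<sigma> * E"
      by (simp add: power2_eq_square mult_ac)
    moreover have "(1 + \<rho>) / \<sigma> * (2 / (1 - \<rho>) * (\<tau> * (\<sigma> * r) * e)) + \<tau> * r * e
        = ((3 + \<rho>) / (1 - \<rho>) * \<tau>) * r * e"
      using \<sigma> \<rho> by (simp add: field_simps)
    ultimately show ?thesis by (simp add: distrib_left)
  qed
  finally show ?thesis
    unfolding \<sigma>_def exps(2) E_def e_def by simp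
qed

lemma le_affine_Inf:
  fixes Y :: "real set"
  assumes Y: "Y \<noteq> {}" and K: "0 < K" and bound: "\<And>y. y \<in> Y \<Longrightarrow> W \<le> K * (Z + 2 * y) + D"
  shows "W \<le> K * (Z + 2 * Inf Y) + D"
proof -
  have "((W - D) / K - Z) / 2 \<le> Inf Y"
  proof (rule cInf_greatest[OF Y])
    fix y assume "y \<in> Y"
    then have "(W - D) / K \<le> Z + 2 * y"
      using bound[OF \<open>y \<in> Y\<close>] K by (simp add: pos_divide_le_eq mult.commute)
    then show "((W - D) / K - Z) / 2 \<le> y" by simp
  qed
  then have "(W - D) / K \<le> Z + 2 * Inf Y" by simp
  then show ?thesis
    using K by (simp add: pos_divide_le_eq mult.commute)
qed

lemma winf_ge_one:
  assumes "0 < B" and "\<forall>b<B. 1 \<le> w b"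
  shows "1 \<le> winf B w"
proof -
  have "w 0 \<le> winf B w"
    unfolding winf_def using assms(1) by (intro Max_ge) auto
  then show ?thesis using assms by force
qed

lemma wnorm0_zero_le: "0 \<le> s \<Longrightarrow> wnorm0 B blk w (\<lambda>_. 0) \<le> s"
  by (simp add: wnorm0_def wsize_def)

lemma best_s_term_error_nonneg:
  assumes "0 \<le> s" and "0 < p"
  shows "0 \<le> best_s_term_error B blk w p s x"
  unfolding best_s_term_error_def using wnorm0_zero_le[OF assms(1)]
  by (intro cInf_greatest) (auto simp: wnorm_def)

lemma wBRNSP_error_bound:
  assumes part: "is_block_partition N B blk" and weights: "\<And>b. b < B \<Longrightarrow> 1 \<le> w b"
    and nsp: "wBRNSP m N B blk w A q s \<rho> \<tau>" and pq: "1 \<le> p" "p \<le> q" and s: "0 < s"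
  shows "wnorm B blk w p (z - x)
    \<le> ((1 + \<rho>)\<^sup>2 / (1 - \<rho>)) / s powr (1 - 1 / p)
        * (wnorm B blk w 1 z - wnorm B blk w 1 x + 2 * best_s_term_error B blk w 1 s x)
      + ((3 + \<rho>) / (1 - \<rho>) * \<tau>) / s powr (1 / q - 1 / p)
        * eucl_norm m (mat_apply N A (z - x))"
  unfolding best_s_term_error_def
proof (rule le_affine_Inf)
  have "wnorm0 B blk w (\<lambda>_. 0) \<le> s"
    using s by (simp add: wnorm0_zero_le)
  then have "wnorm B blk w 1 (x - (\<lambda>_. 0)) \<in> {wnorm B blk w 1 (x - z') | z'. wnorm0 B blk w z' \<le> s}"
    by blast
  then show "{wnorm B blk w 1 (x - z') | z'. wnorm0 B blk w z' \<le> s} \<noteq> {}"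
    by blast
  show "0 < (1 + \<rho>)\<^sup>2 / (1 - \<rho>) / s powr (1 - 1 / p)"
    using nsp s unfolding wBRNSP_def by simp
next
  fix y assume "y \<in> {wnorm B blk w 1 (x - z') | z'. wnorm0 B blk w z' \<le> s}"
  then obtain z' where y: "y = wnorm B blk w 1 (x - z')" and z': "wnorm0 B blk w z' \<le> s"
    by blast
  show "wnorm B blk w p (z - x)
    \<le> (1 + \<rho>)\<^sup>2 / (1 - \<rho>) / s powr (1 - 1 / p) * (wnorm B blk w 1 z - wnorm B blk w 1 x + 2 * y)
      + (3 + \<rho>) / (1 - \<rho>) * \<tau> / s powr (1 / q - 1 / p) * eucl_norm m (mat_apply N A (z - x))"
    unfolding y by (rule wBRNSP_error_bound_sparse[OF part weights nsp pq s z'])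
qed

theorem mainTheorem4:
  fixes m N B :: nat and blk :: "nat \<Rightarrow> nat set" and w :: "nat \<Rightarrow> real"
    and A :: "nat \<Rightarrow> nat \<Rightarrow> real" and p q s \<rho> \<tau> :: real
  assumes part: "is_block_partition N B blk"
    and weights: "\<forall>b<B. w b \<ge> 1"
    and pq: "1 \<le> p" "p \<le> q" "q \<le> 2"
    and s: "s \<ge> (winf B w)\<^sup>2"
    and rho: "0 < \<rho>" "\<rho> < 1" and tau: "0 < \<tau>"
    and nsp: "wBRNSP m N B blk w A q s \<rho> \<tau>"
  shows "\<forall>x z :: nat \<Rightarrow> real.
    wnorm B blk w p (z - x)
      \<le> ((1 + \<rho>)\<^sup>2 / (1 - \<rho>)) / s powr (1 - 1 / p)
          * (wnorm B blk w 1 z - wnorm B blk w 1 x + 2 * best_s_term_error B blk w 1 s x)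
        + ((3 + \<rho>) / (1 - \<rho>) * \<tau>) / s powr (1 / q - 1 / p)
          * eucl_norm m (mat_apply N A (z - x))"
proof (cases "B = 0")
  case True
  have "0 \<le> s" using s order_trans[OF zero_le_power2] by blast
  then show ?thesis
    using True rho tau pq best_s_term_error_nonneg[of s 1]
    by (simp add: wnorm_def eucl_norm_def divide_nonneg_nonneg sum_nonneg)
next
  case False
  then have "1 \<le> (winf B w)\<^sup>2"
    using winf_ge_one[OF _ weights] by (simp add: one_le_power)
  with s have "0 < s" by linarith
  then show ?thesis
    using wBRNSP_error_bound[OF part _ nsp pq(1,2)] weights by blast
qed

end
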